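(* Let $D_1,D_2,D_3$ be three smooth strictly convex outer billiard tables and $T_1,T_2,T_3$ the respective outer billiard maps. Then the set of fixed points of $T_3\circ T_2\circ T_1$ has empty interior.
   Context: An outer billiard table is a strictly convex compact plane domain $D$ (here with smooth boundary). The outer billiard map $T$ is defined on the exterior of $D$: for $x$ outside $D$, take the right support line from $x$ to $D$ (from $x$'s viewpoint) and reflect $x$ in the support point to obtain $T(x)$. *)

theory Defs
  imports "HOL-Analysis.Analysis"
begin

definition cross2 :: "real^2 \<Rightarrow> real^2 \<Rightarrow> real" where
  "cross2 a b = a$1 * b$2 - a$2 * b$1"

definition smooth_curve :: "(real \<Rightarrow> real^2) \<Rightarrow> bool" where
  "smooth_curve \<gamma> \<longleftrightarrow>
     (\<exists>f :: nat \<Rightarrow> real \<Rightarrow> real^2. f 0 = \<gamma> \<and>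
        (\<forall>n t. (f n has_vector_derivative f (Suc n) t) (at t)))"

definition strictly_convex :: "(real^2) set \<Rightarrow> bool" where
  "strictly_convex D \<longleftrightarrow> convex D \<and>
     (\<forall>x\<in>D. \<forall>y\<in>D. x \<noteq> y \<longrightarrow> open_segment x y \<subseteq> interior D)"

definition smooth_boundary :: "(real^2) set \<Rightarrow> bool" where
  "smooth_boundary D \<longleftrightarrow>
     (\<exists>\<gamma>. smooth_curve \<gamma> \<and> (\<forall>t. \<gamma> (t + 1) = \<gamma> t) \<and> inj_on \<gamma> {0..<1} \<and>
          (\<forall>t. vector_derivative \<gamma> (at t) \<noteq> 0) \<and> \<gamma> ` {0..1} = frontier D)"

definition outer_billiard_table :: "(real^2) set \<Rightarrow> bool" where
  "outer_billiard_table D \<longleftrightarrow> compact D \<and> interior D \<noteq> {} \<and> strictly_convex D \<and>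
     smooth_boundary D"

text \<open>Right support point from x: the point p of D such that all of D lies to the
  left of (or on) the directed line from x through p.\<close>
definition right_support_point :: "(real^2) set \<Rightarrow> real^2 \<Rightarrow> real^2" where
  "right_support_point D x = (THE p. p \<in> D \<and> (\<forall>q\<in>D. cross2 (p - x) (q - x) \<ge> 0))"

text \<open>Outer billiard map (meaningful for x outside D): reflect x in the support point.\<close>
definition outer_billiard :: "(real^2) set \<Rightarrow> real^2 \<Rightarrow> real^2" where
  "outer_billiard D x = 2 *\<^sub>R right_support_point D x - x"

end

theory Submission
  imports Defs
begin

text \<open>Suppose T3 \<circ> T2 \<circ> T1 fixes every point x of an open set, and let a, b, c be the
  successive support points. The composition of the three point reflections is the reflection in
  a - b + c, so x = a - b + c, and the tangents at a, b, c are parallel to b - c, c - a, a - b.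
  On a smaller open set the support points depend differentiably on x and the boundary curvature
  at a and b does not vanish. Differentiating these relations shows that the signed area C of the
  triangle abc is locally constant and that C = \<mu>^3 K, where a - x = \<mu> v for the boundary
  velocity v at a and K depends on a only. Moving x along its tangent towards a keeps a fixed but scales \<mu>, contradicting the
  constancy of C.\<close>

section \<open>Cross product and strict convexity\<close>

lemma cross2_skew: "cross2 b a = - cross2 a b"
  by (simp add: cross2_def)

lemma cross2_self [simp]: "cross2 a a = 0"
  by (simp add: cross2_def)

lemma bounded_bilinear_cross2: "bounded_bilinear cross2"
  by (rule bilinear_conv_bounded_bilinear[THEN iffD1])
    (auto simp: bilinear_def cross2_def intro!: linearI simp: algebra_simps)

interpretation cross2: bounded_bilinear cross2
  by (rule bounded_bilinear_cross2)

lemmas continuous_on_cross2 [continuous_intros] = cross2.continuous_on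

declare cross2.zero_left [simp] cross2.zero_right [simp]

lemma cross2_change_base: "cross2 v (q - p) = cross2 v (q - x) - cross2 v (p - x)"
  by (simp add: cross2_def algebra_simps)

lemma cross2_eq_0_imp_parallel:
  assumes "cross2 v u = 0" "v \<noteq> 0"
  shows "u = (inner u v / inner v v) *\<^sub>R v"
proof -
  have "inner v v *\<^sub>R u = inner u v *\<^sub>R v"
    using assms(1) by (simp add: vec_eq_iff forall_2 inner_vec_def sum_2 cross2_def algebra_simps)
  then have "u = inverse (inner v v) *\<^sub>R (inner u v *\<^sub>R v)"
    using assms(2) by (metis inner_eq_zero_iff left_inverse scaleR_one scaleR_scaleR)
  then show ?thesis
    by (simp add: divide_inverse_commute)
qed

lemma strictly_convex_open_segment_subset:
  assumes "strictly_convex D" "x \<in> D" "y \<in> D"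
  shows "open_segment x y \<subseteq> interior D"
  using assms by (cases "x = y") (simp_all add: strictly_convex_def)

lemma exists_cross2_neg_near_interior:
  assumes "m \<in> interior D" "v \<noteq> 0"
  shows "\<exists>q\<in>D. cross2 v (q - m) < 0"
proof -
  obtain r where r: "r > 0" "ball m r \<subseteq> D"
    using assms(1) mem_interior by blast
  define w :: "real^2" where "w = vector [v$2, - v$1]"
  have "cross2 v w = - (norm v)\<^sup>2"
    by (simp add: w_def cross2_def norm_vec_def L2_set_def sum_2 power2_eq_square)
  then have vw: "cross2 v w < 0"
    using assms(2) by simp
  then have "w \<noteq> 0"
    by auto
  define q where "q = m + (r / (2 * norm w)) *\<^sub>R w"
  have "dist m q = r / 2"
    using \<open>w \<noteq> 0\<close> r(1) by (simp add: q_def dist_norm)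
  then have "q \<in> D"
    using r by auto
  moreover have "0 < r / (2 * norm w)"
    using r(1) \<open>w \<noteq> 0\<close> by simp
  then have "(r / (2 * norm w)) * cross2 v w < 0"
    using vw by (rule mult_pos_neg)
  then have "cross2 v (q - m) < 0"
    by (simp add: q_def cross2.scaleR_right)
  ultimately show ?thesis
    by blast
qed

lemma strictly_convex_supporting_line_unique:
  assumes "strictly_convex D" "p \<in> D" "p' \<in> D" "v \<noteq> 0"
    and "cross2 v (p' - p) = 0" "\<forall>q\<in>D. 0 \<le> cross2 v (q - p)"
  shows "p' = p"
proof (rule ccontr)
  assume "p' \<noteq> p"
  then have "midpoint p p' \<in> open_segment p p'"
    by (simp add: midpoint_in_open_segment)
  then have "midpoint p p' \<in> interior D"
    using strictly_convex_open_segment_subset[OF assms(1-3)] by blast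
  then obtain q where q: "q \<in> D" "cross2 v (q - midpoint p p') < 0"
    using exists_cross2_neg_near_interior assms(4) by blast
  have "midpoint p p' - p = (1/2) *\<^sub>R (p' - p)"
    by (simp add: midpoint_def vec_eq_iff field_simps)
  then have "cross2 v (midpoint p p' - p) = 0"
    using assms(5) by (simp add: cross2.scaleR_right)
  moreover have "cross2 v (q - p) = cross2 v (q - midpoint p p') + cross2 v (midpoint p p' - p)"
    by (simp add: cross2_def algebra_simps)
  ultimately have "cross2 v (q - p) = cross2 v (q - midpoint p p')"
    by simp
  then show False
    using q assms(6) by fastforce
qed

lemma collinear_if_cross2_eq_0:
  assumes "v \<noteq> 0" "\<And>x. x \<in> S \<Longrightarrow> cross2 v (x - p) = 0"
  shows "collinear S"
  unfolding collinear_def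
proof (rule exI[of _ v], intro ballI)
  fix x y assume "x \<in> S" "y \<in> S"
  then have "x - p = (inner (x - p) v / inner v v) *\<^sub>R v" "y - p = (inner (y - p) v / inner v v) *\<^sub>R v"
    using cross2_eq_0_imp_parallel assms by blast+
  then obtain kx ky where k: "x - p = kx *\<^sub>R v" "y - p = ky *\<^sub>R v"
    by blast
  have "x - y = (x - p) - (y - p)"
    by simp
  also have "\<dots> = (kx - ky) *\<^sub>R v"
    unfolding k by (simp add: scaleR_diff_left)
  finally show "\<exists>c. x - y = c *\<^sub>R v"
    by blast
qed

lemma strictly_convex_frontier_not_collinear:
  assumes "closed D" "strictly_convex D" "p \<in> frontier D" "q \<in> frontier D" "r \<in> frontier D"
    and "p \<noteq> q" "q \<noteq> r" "r \<noteq> p" "collinear {p, q, r}"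
  shows False
proof -
  have not_between: "\<not> between (a, b) m"
    if "m \<in> frontier D" "a \<in> frontier D" "b \<in> frontier D" "m \<noteq> a" "m \<noteq> b" for m a b
  proof
    assume "between (a, b) m"
    then have "m \<in> open_segment a b"
      using that(4,5) by (simp add: between_mem_segment open_segment_def)
    moreover have "a \<in> D" "b \<in> D"
      using that(2,3) frontier_subset_closed[OF assms(1)] by auto
    ultimately have "m \<in> interior D"
      using strictly_convex_open_segment_subset[OF assms(2)] by blast
    then show False
      using that(1) by (simp add: frontier_def)
  qed
  from assms(9) have "between (q, r) p \<or> between (r, p) q \<or> between (p, q) r"
    unfolding collinear_between_cases .
  then show False
    using not_between[of p q r] not_between[of q r p] not_between[of r p q] assms(3-8) by blast
qed

section \<open>Support points\<close>

definition is_right_support_point :: "(real^2) set \<Rightarrow> real^2 \<Rightarrow> real^2 \<Rightarrow> bool" where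
  "is_right_support_point D x p \<longleftrightarrow> p \<in> D \<and> (\<forall>q\<in>D. 0 \<le> cross2 (p - x) (q - x))"

lemma is_right_support_point_unique:
  assumes "strictly_convex D" "x \<notin> D"
    and "is_right_support_point D x p" "is_right_support_point D x p'"
  shows "p' = p"
proof (rule strictly_convex_supporting_line_unique[OF assms(1), of p p' "p - x"])
  show "p \<in> D" "p' \<in> D" "p - x \<noteq> 0"
    using assms by (auto simp: is_right_support_point_def)
  have "0 \<le> cross2 (p - x) (p' - x)" "0 \<le> cross2 (p' - x) (p - x)"
    using assms(3,4) \<open>p \<in> D\<close> \<open>p' \<in> D\<close> by (auto simp: is_right_support_point_def)
  then show "cross2 (p - x) (p' - p) = 0"
    using cross2_change_base[of "p - x" p' p x] cross2_skew[of "p' - x" "p - x"] by simp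
  show "\<forall>q\<in>D. 0 \<le> cross2 (p - x) (q - p)"
    using assms(3) cross2_change_base[of "p - x" _ p x] by (simp add: is_right_support_point_def)
qed

lemma is_right_support_point_exists:
  assumes "compact D" "convex D" "D \<noteq> {}" "x \<notin> D"
  shows "\<exists>p. is_right_support_point D x p"
proof -
  obtain a b where ab: "inner a x < b" "\<forall>y\<in>D. b < inner a y"
    using separating_hyperplane_closed_point[OF assms(2) compact_imp_closed[OF assms(1)] assms(4)]
    by blast
  have pos: "0 < inner a (q - x)" if "q \<in> D" for q
    using ab that by (auto simp: inner_diff_right)
  obtain q0 where "q0 \<in> D"
    using assms(3) by blast
  then have "a \<noteq> 0"
    using pos by fastforce
  \<comment> \<open>The support point minimises the slope of the ray from x, measured against the normal a.\<close>
  define slope where "slope q = cross2 a (q - x) / inner a (q - x)" for q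
  have "continuous_on D slope"
    unfolding slope_def by (intro continuous_intros) (use pos in force)
  then obtain p where p: "p \<in> D" "\<forall>q\<in>D. slope p \<le> slope q"
    using continuous_attains_inf[OF assms(1,3)] by blast
  have "0 \<le> cross2 (p - x) (q - x)" if "q \<in> D" for q
  proof -
    have "slope p \<le> slope q"
      using p that by blast
    then have "cross2 a (p - x) * inner a (q - x) \<le> cross2 a (q - x) * inner a (p - x)"
      using pos[OF \<open>p \<in> D\<close>] pos[OF that] by (simp add: slope_def divide_simps)
    moreover have "cross2 (p - x) (q - x) * inner a a
        = inner a (p - x) * cross2 a (q - x) - inner a (q - x) * cross2 a (p - x)"
      by (simp add: cross2_def inner_vec_def sum_2 algebra_simps)
    ultimately have "0 \<le> cross2 (p - x) (q - x) * inner a a"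
      by (simp add: algebra_simps)
    moreover have "0 < inner a a"
      using \<open>a \<noteq> 0\<close> by simp
    ultimately show ?thesis
      by (auto simp: zero_le_mult_iff)
  qed
  then show ?thesis
    using p(1) unfolding is_right_support_point_def by blast
qed

lemma right_support_point_eqI:
  assumes "strictly_convex D" "x \<notin> D" "is_right_support_point D x p"
  shows "right_support_point D x = p"
  unfolding right_support_point_def is_right_support_point_def[symmetric]
proof (rule the_equality)
  show "is_right_support_point D x p"
    by (rule assms(3))
qed (rule is_right_support_point_unique[OF assms])

lemma right_support_point:
  assumes "compact D" "strictly_convex D" "D \<noteq> {}" "x \<notin> D"
  shows "is_right_support_point D x (right_support_point D x)"
proof -
  have "convex D"
    using assms(2) by (simp add: strictly_convex_def)
  then obtain p where "is_right_support_point D x p"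
    using is_right_support_point_exists[OF assms(1) _ assms(3,4)] by blast
  then show ?thesis
    using right_support_point_eqI assms(2,4) by simp
qed

lemma right_support_point_in_frontier:
  assumes "compact D" "strictly_convex D" "D \<noteq> {}" "x \<notin> D"
  shows "right_support_point D x \<in> frontier D"
proof -
  let ?p = "right_support_point D x"
  have p: "is_right_support_point D x ?p"
    using right_support_point[OF assms] .
  have "?p \<notin> interior D"
  proof
    assume "?p \<in> interior D"
    moreover have "?p - x \<noteq> 0"
      using p assms(4) by (auto simp: is_right_support_point_def)
    ultimately obtain q where "q \<in> D" "cross2 (?p - x) (q - ?p) < 0"
      using exists_cross2_neg_near_interior by blast
    then show False
      using p cross2_change_base[of "?p - x" q ?p x] by (auto simp: is_right_support_point_def)
  qed
  then show ?thesis
    using p compact_imp_closed[OF assms(1)]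
    by (simp add: is_right_support_point_def frontier_def closure_closed)
qed

lemma is_right_support_point_along_ray:
  assumes "is_right_support_point D x p" "s < 1"
  shows "is_right_support_point D (x + s *\<^sub>R (p - x)) p"
proof -
  have "cross2 (p - (x + s *\<^sub>R (p - x))) (q - (x + s *\<^sub>R (p - x))) = (1 - s) * cross2 (p - x) (q - x)"
    for q
    by (simp add: cross2_def algebra_simps)
  then show ?thesis
    using assms by (simp add: is_right_support_point_def)
qed

lemma continuous_on_right_support_point:
  assumes "compact D" "strictly_convex D" "D \<noteq> {}"
  shows "continuous_on (- D) (right_support_point D)"
proof -
  let ?f = "right_support_point D"
  define C where "C = (\<Inter>q\<in>D. {z. 0 \<le> cross2 (snd z - fst z) (q - fst z)})"
  have "closed C"
    unfolding C_def by (intro closed_INT ballI closed_Collect_le continuous_intros)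
  have graph: "(\<lambda>x. (x, ?f x)) ` (- D) = ((- D) \<times> D) \<inter> C"
  proof (intro equalityI subsetI)
    fix z assume "z \<in> (\<lambda>x. (x, ?f x)) ` (- D)"
    then show "z \<in> ((- D) \<times> D) \<inter> C"
      using right_support_point[OF assms] by (auto simp: C_def is_right_support_point_def)
  next
    fix z assume z: "z \<in> ((- D) \<times> D) \<inter> C"
    then have "is_right_support_point D (fst z) (snd z)"
      by (auto simp: C_def is_right_support_point_def)
    then have "?f (fst z) = snd z"
      using right_support_point_eqI assms(2) z by auto
    then show "z \<in> (\<lambda>x. (x, ?f x)) ` (- D)"
      using z by (auto intro!: image_eqI[of _ _ "fst z"])
  qed
  have "closedin (top_of_set ((- D) \<times> D)) ((\<lambda>x. (x, ?f x)) ` (- D))"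
    unfolding graph by (rule closedin_closed_Int[OF \<open>closed C\<close>])
  moreover have "?f \<in> - D \<rightarrow> D"
    using right_support_point[OF assms] by (auto simp: is_right_support_point_def)
  ultimately show ?thesis
    using continuous_closed_graph_eq[OF assms(1)] by blast
qed

lemma continuous_on_outer_billiard:
  assumes "compact D" "strictly_convex D" "D \<noteq> {}"
  shows "continuous_on (- D) (outer_billiard D)"
  unfolding outer_billiard_def[abs_def]
  by (intro continuous_intros continuous_on_right_support_point[OF assms])

text \<open>The support point p of x also supports D on the line through y = 2p - x, with D on the same
  side; strict convexity makes it unique, so y determines x = 2p - y.\<close>
lemma inj_on_outer_billiard:
  assumes "compact D" "strictly_convex D" "D \<noteq> {}"
  shows "inj_on (outer_billiard D) (- D)"
proof (rule inj_onI)
  fix x x' assume "x \<in> - D" "x' \<in> - D" and eq: "outer_billiard D x = outer_billiard D x'"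
  define y where "y = outer_billiard D x"
  let ?p = "right_support_point D x" and ?p' = "right_support_point D x'"
  have p: "is_right_support_point D x ?p" "is_right_support_point D x' ?p'"
    using right_support_point[OF assms] \<open>x \<in> - D\<close> \<open>x' \<in> - D\<close> by auto
  have y: "y = 2 *\<^sub>R ?p - x" "y = 2 *\<^sub>R ?p' - x'"
    using eq by (simp_all add: y_def outer_billiard_def)
  have side: "cross2 (2 *\<^sub>R p - z - p) (q - p) = cross2 (p - z) (q - z)" for p z q
    by (simp add: cross2_def algebra_simps)
  have "?p' = ?p"
  proof (rule strictly_convex_supporting_line_unique[OF assms(2), of ?p ?p' "y - ?p"])
    show "?p \<in> D" "?p' \<in> D"
      using p by (auto simp: is_right_support_point_def)
    have "y - ?p = ?p - x"
      using y(1) by (simp add: scaleR_2 algebra_simps)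
    then show "y - ?p \<noteq> 0"
      using \<open>?p \<in> D\<close> \<open>x \<in> - D\<close> by auto
    show "\<forall>q\<in>D. 0 \<le> cross2 (y - ?p) (q - ?p)"
      using p(1) side[of ?p x, folded y(1)] by (simp add: is_right_support_point_def)
    have "0 \<le> cross2 (y - ?p) (?p' - ?p)" "0 \<le> cross2 (y - ?p') (?p - ?p')"
      using p side[of ?p x, folded y(1)] side[of ?p' x', folded y(2)] \<open>?p \<in> D\<close> \<open>?p' \<in> D\<close>
      by (auto simp: is_right_support_point_def)
    moreover have "cross2 (y - ?p') (?p - ?p') = - cross2 (y - ?p) (?p' - ?p)"
      by (simp add: cross2_def algebra_simps)
    ultimately show "cross2 (y - ?p) (?p' - ?p) = 0"
      by linarith
  qed
  moreover have "x = 2 *\<^sub>R ?p - y"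
    using y(1) by simp
  moreover have "x' = 2 *\<^sub>R ?p' - y"
    using y(2) by simp
  ultimately show "x = x'"
    by simp
qed

lemma open_image_outer_billiard:
  assumes "compact D" "strictly_convex D" "D \<noteq> {}" "open V" "V \<subseteq> - D"
  shows "open (outer_billiard D ` V)"
  using assms(4,5)
    continuous_on_subset[OF continuous_on_outer_billiard[OF assms(1-3)]]
    inj_on_subset[OF inj_on_outer_billiard[OF assms(1-3)]]
  by (intro invariance_of_domain) auto

lemma open_vimage_outer_billiard:
  assumes "compact D" "strictly_convex D" "D \<noteq> {}" "open V" "V \<subseteq> - D" "open V'"
  shows "open (V \<inter> outer_billiard D -` V')"
  using continuous_on_subset[OF continuous_on_outer_billiard[OF assms(1-3)] assms(5)] assms(4,6)
  by (rule continuous_open_preimage)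

section \<open>Plane curves and triangles\<close>

lemma cross2_eq_0_if_derivative_cross2_eq_0:
  fixes f f' :: "real \<Rightarrow> real^2"
  assumes "\<And>t. (f has_vector_derivative f' t) (at t)" "\<forall>t\<in>{a..b}. cross2 u (f' t) = 0"
    and "t \<in> {a..b}"
  shows "cross2 u (f t - f a) = 0"
proof -
  have "((\<lambda>s. cross2 u (f s - f a)) has_real_derivative cross2 u (f' s)) (at s)" for s
    using cross2.has_vector_derivative[OF has_vector_derivative_const
        has_vector_derivative_diff[OF assms(1) has_vector_derivative_const]]
    by (simp add: has_real_derivative_iff_has_vector_derivative)
  then have "((\<lambda>s. cross2 u (f s - f a)) has_real_derivative 0) (at s within {a..b})"
    if "s \<in> {a..b}" for s
    using assms(2) that by (metis has_field_derivative_at_within)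
  from has_field_derivative_zero_constant[OF convex_real_interval(5) this]
  obtain k where k: "\<forall>s\<in>{a..b}. cross2 u (f s - f a) = k"
    by blast
  have "a \<in> {a..b}"
    using assms(3) by simp
  then show ?thesis
    using k assms(3) by (metis cross2.zero_right diff_self)
qed

text \<open>The function (cross2 (v a) (v t))^2 / |v t|^2 has derivative zero on {a..b}.\<close>
lemma cross2_eq_0_if_curvature_eq_0:
  fixes v w :: "real \<Rightarrow> real^2"
  assumes "\<And>t. (v has_vector_derivative w t) (at t)" "\<And>t. v t \<noteq> 0"
    and "\<forall>t\<in>{a..b}. cross2 (v t) (w t) = 0" "t \<in> {a..b}"
  shows "cross2 (v a) (v t) = 0"
proof -
  define c where "c t = cross2 (v a) (v t)" for t
  define n where "n t = inner (v t) (v t)" for t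
  have npos: "0 < n t" for t
    using assms(2) by (simp add: n_def)
  have dc: "(c has_real_derivative cross2 (v a) (w t)) (at t)" for t
    using cross2.has_vector_derivative[OF has_vector_derivative_const assms(1)]
    by (simp add: c_def[abs_def] has_real_derivative_iff_has_vector_derivative)
  have dn: "(n has_real_derivative 2 * inner (v t) (w t)) (at t)" for t
    using bounded_bilinear.has_vector_derivative[OF bounded_bilinear_inner assms(1) assms(1)]
    by (simp add: n_def[abs_def] has_real_derivative_iff_has_vector_derivative inner_commute)
  have "((\<lambda>t. c t * c t / n t) has_real_derivative 0) (at t within {a..b})" if "t \<in> {a..b}" for t
  proof -
    define \<kappa> where "\<kappa> = inner (w t) (v t) / inner (v t) (v t)"
    have wt: "w t = \<kappa> *\<^sub>R v t"
      unfolding \<kappa>_def using cross2_eq_0_imp_parallel assms(2,3) that by blast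
    have "cross2 (v a) (w t) = \<kappa> * c t" "inner (v t) (w t) = \<kappa> * n t"
      by (simp_all add: wt c_def n_def cross2.scaleR_right)
    then show ?thesis
      using DERIV_divide[OF DERIV_mult[OF dc dc] dn, of t] npos[of t]
      by (simp add: has_field_derivative_at_within algebra_simps)
  qed
  from has_field_derivative_zero_constant[OF convex_real_interval(5) this]
  obtain k where k: "\<forall>s\<in>{a..b}. c s * c s / n s = k"
    by blast
  have "a \<in> {a..b}"
    using assms(4) by simp
  then have "c t * c t / n t = c a * c a / n a"
    using k assms(4) by metis
  then show ?thesis
    using npos[of t] by (simp add: c_def)
qed

lemma exists_left_inverse_pair_combination:
  assumes "cross2 a c \<noteq> 0"
  shows "\<exists>g. bounded_linear g \<and> g \<circ> (\<lambda>h :: real \<times> real. fst h *\<^sub>R a + snd h *\<^sub>R c) = id"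
proof (intro exI conjI)
  let ?g = "\<lambda>b. (cross2 b c / cross2 a c, cross2 a b / cross2 a c)"
  show "bounded_linear ?g"
    by (intro bounded_linear_Pair bounded_linear_divide[THEN bounded_linear_compose]
        cross2.bounded_linear_left cross2.bounded_linear_right)
  show "?g \<circ> (\<lambda>h. fst h *\<^sub>R a + snd h *\<^sub>R c) = id"
    using assms by (auto simp: fun_eq_iff cross2.add_left cross2.add_right cross2.scaleR_left
        cross2.scaleR_right cross2_skew[of c a])
qed

lemma exists_segment_point_in_ball:
  fixes x p :: "'a::real_normed_vector"
  assumes "r > 0"
  obtains s where "0 < s" "s < 1" "x + s *\<^sub>R (p - x) \<in> ball x r"
proof
  define s where "s = min (1/2) (r / (2 * (norm (p - x) + 1)))"
  have n: "0 < norm (p - x) + 1"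
    using norm_ge_zero[of "p - x"] by linarith
  then show "0 < s" "s < 1"
    using assms by (auto simp: s_def)
  have "s * norm (p - x) \<le> r / (2 * (norm (p - x) + 1)) * (norm (p - x) + 1)"
    using assms n by (intro mult_mono) (auto simp: s_def)
  also have "\<dots> = r / 2"
    using n by (simp add: field_simps)
  also have "\<dots> < r"
    using assms by simp
  finally show "x + s *\<^sub>R (p - x) \<in> ball x r"
    using \<open>0 < s\<close> by (simp add: dist_norm)
qed

lemma has_derivative_unique_on_open:
  assumes "open S" "x \<in> S" "\<And>y. y \<in> S \<Longrightarrow> f y = g y"
    and "(f has_derivative f') (at x)" "(g has_derivative g') (at x)"
  shows "f' = g'"
proof -
  have "(g has_derivative f') (at x)"
    using assms(4) by (rule has_derivative_transform_within_open[OF _ assms(1,2)]) (use assms(3) in simp)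
  then show ?thesis
    using has_derivative_unique assms(5) by blast
qed

lemma has_derivative_vanishing_on_open:
  assumes "open S" "x \<in> S" "\<And>y. y \<in> S \<Longrightarrow> f y = 0" "(f has_derivative f') (at x)"
  shows "f' h = 0"
proof -
  have "f' = (\<lambda>h. 0)"
    by (rule has_derivative_unique_on_open[OF assms has_derivative_const])
  then show ?thesis
    by simp
qed

lemma has_derivative_compose_curve:
  assumes "(f has_vector_derivative f') (at (t x))" "(t has_derivative L) (at x)"
  shows "((\<lambda>y. f (t y)) has_derivative (\<lambda>h. L h *\<^sub>R f')) (at x)"
  using diff_chain_at[OF assms(2) assms(1)[unfolded has_vector_derivative_def]] by (simp add: o_def)

lemma three_reflections_fixed_point:
  fixes x a b c :: "'a::real_vector"
  assumes "2 *\<^sub>R c - (2 *\<^sub>R b - (2 *\<^sub>R a - x)) = x"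
  shows "x = a - b + c" "a - x = b - c" "b - (2 *\<^sub>R a - x) = c - a"
    "c - (2 *\<^sub>R b - (2 *\<^sub>R a - x)) = a - b"
proof -
  have "2 *\<^sub>R (a - b + c) = (2 *\<^sub>R c - (2 *\<^sub>R b - (2 *\<^sub>R a - x))) + x"
    by (simp add: algebra_simps)
  also have "\<dots> = 2 *\<^sub>R x"
    using assms by (simp add: scaleR_2)
  finally show "x = a - b + c"
    by simp
  then show "a - x = b - c" "b - (2 *\<^sub>R a - x) = c - a" "c - (2 *\<^sub>R b - (2 *\<^sub>R a - x)) = a - b"
    by (simp_all add: algebra_simps scaleR_2)
qed

text \<open>By span, h \<mapsto> (L1 h, L2 h, L3 h) has rank two; r and s both annihilate its image, so they
  are proportional.\<close>
lemma annihilators_of_rank_two_proportional: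
  fixes L1 L2 L3 :: "real^2 \<Rightarrow> real"
  assumes span: "\<And>h. h = L1 h *\<^sub>R v1 + L2 h *\<^sub>R v2 + L3 h *\<^sub>R v3"
    and r: "\<And>h. r1 * L1 h + r2 * L2 h + r3 * L3 h = 0"
    and s: "\<And>h. s1 * L1 h + s2 * L2 h + s3 * L3 h = 0"
  shows "r1 * s2 = r2 * s1" "r1 * s3 = r3 * s1"
proof -
  define e1 :: "real^2" where "e1 = axis 1 1"
  define e2 :: "real^2" where "e2 = axis 2 1"
  define N1 where "N1 = L2 e1 * L3 e2 - L3 e1 * L2 e2"
  define N2 where "N2 = L3 e1 * L1 e2 - L1 e1 * L3 e2"
  define N3 where "N3 = L1 e1 * L2 e2 - L2 e1 * L1 e2"
  have "1 = cross2 e1 e2"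
    by (simp add: e1_def e2_def cross2_def axis_def)
  also have "\<dots> = N3 * cross2 v1 v2 + N2 * cross2 v3 v1 + N1 * cross2 v2 v3"
    by (subst (1 2) span) (simp add: N1_def N2_def N3_def cross2_def algebra_simps)
  finally have "N1 \<noteq> 0 \<or> N2 \<noteq> 0 \<or> N3 \<noteq> 0"
    by auto
  moreover have "N1 * (r1 * s2 - r2 * s1) = 0" "N2 * (r1 * s2 - r2 * s1) = 0" "N3 * (r1 * s2 - r2 * s1) = 0"
    "N1 * (r1 * s3 - r3 * s1) = 0" "N2 * (r1 * s3 - r3 * s1) = 0" "N3 * (r1 * s3 - r3 * s1) = 0"
    using r[of e1] r[of e2] s[of e1] s[of e2] unfolding N1_def N2_def N3_def by algebra+
  ultimately show "r1 * s2 = r2 * s1" "r1 * s3 = r3 * s1"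
    by auto
qed

lemma triangle_area_has_derivative_zero:
  assumes "(a has_derivative (\<lambda>h. L1 h *\<^sub>R v1)) (at x)"
    and "(b has_derivative (\<lambda>h. L2 h *\<^sub>R v2)) (at x)"
    and "(c has_derivative (\<lambda>h. L3 h *\<^sub>R v3)) (at x)"
    and "cross2 v1 (b x - c x) = 0" "cross2 v2 (c x - a x) = 0" "cross2 v3 (a x - b x) = 0"
  shows "((\<lambda>y. cross2 (c y - a y) (a y - b y)) has_derivative (\<lambda>h. 0)) (at x)"
proof -
  have "((\<lambda>y. cross2 (c y - a y) (a y - b y)) has_derivative (\<lambda>h.
      cross2 (c x - a x) (L1 h *\<^sub>R v1 - L2 h *\<^sub>R v2) + cross2 (L3 h *\<^sub>R v3 - L1 h *\<^sub>R v1) (a x - b x)))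
      (at x)"
    by (intro cross2.FDERIV has_derivative_diff assms(1-3))
  moreover have "cross2 (c x - a x) (L1 h *\<^sub>R v1 - L2 h *\<^sub>R v2) + cross2 (L3 h *\<^sub>R v3 - L1 h *\<^sub>R v1) (a x - b x)
      = L1 h * cross2 v1 (b x - c x) + L2 h * cross2 v2 (c x - a x) + L3 h * cross2 v3 (a x - b x)"
    for h
    by (simp add: cross2_def algebra_simps)
  ultimately show ?thesis
    using assms(4-6) by simp
qed

text \<open>The two relations come from differentiating the tangency conditions at a and b, whose
  derivatives are proportional because y = a y - b y + c y forces (L1, L2, L3) to have rank two.\<close>
lemma tangency_second_order_relations:
  fixes a b c u1 u2 :: "real^2 \<Rightarrow> real^2"
  assumes "open W" "x \<in> W"
    and da: "(a has_derivative (\<lambda>h. L1 h *\<^sub>R u1 x)) (at x)"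
    and du1: "(u1 has_derivative (\<lambda>h. L1 h *\<^sub>R w1)) (at x)"
    and db: "(b has_derivative (\<lambda>h. L2 h *\<^sub>R u2 x)) (at x)"
    and du2: "(u2 has_derivative (\<lambda>h. L2 h *\<^sub>R w2)) (at x)"
    and dc: "(c has_derivative (\<lambda>h. L3 h *\<^sub>R v3)) (at x)"
    and sum: "\<And>y. y \<in> W \<Longrightarrow> y = a y - b y + c y"
    and tan1: "\<And>y. y \<in> W \<Longrightarrow> cross2 (u1 y) (b y - c y) = 0"
    and tan2: "\<And>y. y \<in> W \<Longrightarrow> cross2 (u2 y) (c y - a y) = 0"
  shows "cross2 w1 (b x - c x) * cross2 w2 (c x - a x) = (cross2 (u1 x) (u2 x))\<^sup>2"
    and "cross2 w1 (b x - c x) * cross2 (u2 x) v3 = cross2 v3 (u1 x) * cross2 (u1 x) (u2 x)"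
proof -
  have "((\<lambda>y. a y - b y + c y) has_derivative
      (\<lambda>h. L1 h *\<^sub>R u1 x - L2 h *\<^sub>R u2 x + L3 h *\<^sub>R v3)) (at x)"
    by (intro has_derivative_add has_derivative_diff da db dc)
  then have "(\<lambda>h. h) = (\<lambda>h. L1 h *\<^sub>R u1 x - L2 h *\<^sub>R u2 x + L3 h *\<^sub>R v3)"
    using has_derivative_unique_on_open[OF assms(1,2), of "\<lambda>y. y" "\<lambda>y. a y - b y + c y"]
      sum has_derivative_ident by blast
  then have span: "h = L1 h *\<^sub>R u1 x + L2 h *\<^sub>R (- u2 x) + L3 h *\<^sub>R v3" for h
    by (drule_tac fun_cong[of _ _ h]) simp
  have r: "cross2 w1 (b x - c x) * L1 h + cross2 (u1 x) (u2 x) * L2 h + cross2 v3 (u1 x) * L3 h = 0"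
    for h
  proof -
    have "cross2 (u1 x) (L2 h *\<^sub>R u2 x - L3 h *\<^sub>R v3) + cross2 (L1 h *\<^sub>R w1) (b x - c x) = 0"
      using assms(1,2) tan1 cross2.FDERIV[OF du1 has_derivative_diff[OF db dc]]
      by (rule has_derivative_vanishing_on_open)
    then show ?thesis
      by (simp add: cross2_def algebra_simps)
  qed
  have s: "cross2 (u1 x) (u2 x) * L1 h + cross2 w2 (c x - a x) * L2 h + cross2 (u2 x) v3 * L3 h = 0"
    for h
  proof -
    have "cross2 (u2 x) (L3 h *\<^sub>R v3 - L1 h *\<^sub>R u1 x) + cross2 (L2 h *\<^sub>R w2) (c x - a x) = 0"
      using assms(1,2) tan2 cross2.FDERIV[OF du2 has_derivative_diff[OF dc da]]
      by (rule has_derivative_vanishing_on_open)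
    then show ?thesis
      by (simp add: cross2_def algebra_simps)
  qed
  from annihilators_of_rank_two_proportional[OF span r s]
  show "cross2 w1 (b x - c x) * cross2 w2 (c x - a x) = (cross2 (u1 x) (u2 x))\<^sup>2"
    and "cross2 w1 (b x - c x) * cross2 (u2 x) v3 = cross2 v3 (u1 x) * cross2 (u1 x) (u2 x)"
    by (simp_all add: power2_eq_square)
qed

lemma triangle_area_eq_cube:
  fixes a b c v1 v2 v3 w1 w2 :: "real^2"
  assumes "a \<noteq> b" "b \<noteq> c" "c \<noteq> a" "v2 \<noteq> 0" "v3 \<noteq> 0"
    and v1: "b - c = \<mu> *\<^sub>R v1" and v2: "cross2 v2 (c - a) = 0" and v3: "cross2 v3 (a - b) = 0"
    and curv1: "cross2 v1 w1 \<noteq> 0" and curv2: "cross2 v2 w2 \<noteq> 0"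
    and M1: "cross2 w1 (b - c) * cross2 w2 (c - a) = (cross2 v1 v2)\<^sup>2"
    and M2: "cross2 w1 (b - c) * cross2 v2 v3 = cross2 v3 v1 * cross2 v1 v2"
  shows "cross2 (c - a) (a - b) \<noteq> 0" "\<mu> ^ 3 * cross2 w1 v1 = cross2 (c - a) (a - b)"
proof -
  define C where "C = cross2 (c - a) (a - b)"
  obtain m2 where m2: "v2 = m2 *\<^sub>R (c - a)" "m2 \<noteq> 0"
    using cross2_eq_0_imp_parallel[of "c - a" v2] v2 assms(3,4) cross2_skew[of v2]
    by (metis divide_eq_0_iff eq_iff_diff_eq_0 neg_equal_0_iff_equal scaleR_zero_left)
  obtain m3 where m3: "v3 = m3 *\<^sub>R (a - b)" "m3 \<noteq> 0"
    using cross2_eq_0_imp_parallel[of "a - b" v3] v3 assms(1,5) cross2_skew[of v3]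
    by (metis divide_eq_0_iff eq_iff_diff_eq_0 neg_equal_0_iff_equal scaleR_zero_left)
  have "\<mu> \<noteq> 0"
    using v1 assms(2) by auto
  define K where "K = cross2 w1 v1"
  have eqs: "\<mu> * cross2 v1 v2 = m2 * C" "\<mu> * cross2 v3 v1 = m3 * C" "cross2 v2 v3 = m2 * m3 * C"
    "cross2 w1 (b - c) = \<mu> * K"
    using v1 by (simp_all add: m2(1) m3(1) C_def K_def cross2_def algebra_simps)
  have "K \<noteq> 0"
    using curv1 by (simp add: K_def cross2_skew[of w1])
  have "cross2 w2 (c - a) \<noteq> 0"
    using curv2 m2 by (simp add: cross2.scaleR_left cross2_skew[of w2])
  have "C \<noteq> 0"
  proof
    assume "C = 0"
    then have "cross2 v1 v2 = 0"
      using eqs(1) \<open>\<mu> \<noteq> 0\<close> by simp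
    then show False
      using M1 eqs(4) \<open>\<mu> \<noteq> 0\<close> \<open>K \<noteq> 0\<close> \<open>cross2 w2 (c - a) \<noteq> 0\<close> by simp
  qed
  have "m2 * m3 * (C * (\<mu> ^ 3 * K)) = \<mu>\<^sup>2 * (cross2 w1 (b - c) * cross2 v2 v3)"
    by (simp add: eqs(3,4) power2_eq_square power3_eq_cube algebra_simps)
  also have "\<dots> = (\<mu> * cross2 v3 v1) * (\<mu> * cross2 v1 v2)"
    using M2 by (simp add: power2_eq_square algebra_simps)
  also have "\<dots> = m2 * m3 * (C * C)"
    by (simp add: eqs(1,2) algebra_simps)
  finally have "C * (\<mu> ^ 3 * K) = C * C"
    using m2(2) m3(2) by simp
  then show "cross2 (c - a) (a - b) \<noteq> 0" "\<mu> ^ 3 * cross2 w1 v1 = cross2 (c - a) (a - b)"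
    using \<open>C \<noteq> 0\<close> by (simp_all add: C_def K_def)
qed

section \<open>Parametrised tables\<close>

locale smooth_table =
  fixes D :: "(real^2) set" and \<gamma> \<gamma>' \<gamma>'' :: "real \<Rightarrow> real^2"
  assumes table: "outer_billiard_table D"
    and curve_has_vector_derivative: "\<And>t. (\<gamma> has_vector_derivative \<gamma>' t) (at t)"
    and tangent_has_vector_derivative: "\<And>t. (\<gamma>' has_vector_derivative \<gamma>'' t) (at t)"
    and continuous_on_acceleration: "continuous_on UNIV \<gamma>''"
    and curve_periodic: "\<And>t. \<gamma> (t + 1) = \<gamma> t"
    and inj_on_period: "inj_on \<gamma> {0..<1}"
    and tangent_nonzero: "\<And>t. \<gamma>' t \<noteq> 0"
    and image_period: "\<gamma> ` {0..1} = frontier D"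

lemma smooth_table_exists:
  assumes "outer_billiard_table D"
  obtains \<gamma> \<gamma>' \<gamma>'' where "smooth_table D \<gamma> \<gamma>' \<gamma>''"
proof -
  obtain \<gamma> where \<gamma>: "smooth_curve \<gamma>" "\<forall>t. \<gamma> (t + 1) = \<gamma> t" "inj_on \<gamma> {0..<1}"
      "\<forall>t. vector_derivative \<gamma> (at t) \<noteq> 0" "\<gamma> ` {0..1} = frontier D"
    using assms unfolding outer_billiard_table_def smooth_boundary_def by blast
  obtain f :: "nat \<Rightarrow> real \<Rightarrow> real^2"
    where f: "f 0 = \<gamma>" "\<And>n t. (f n has_vector_derivative f (Suc n) t) (at t)"
    using \<gamma>(1) unfolding smooth_curve_def by blast
  show thesis
  proof (rule that[of \<gamma> "f (Suc 0)" "f (Suc (Suc 0))"], unfold_locales)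
    show "(\<gamma> has_vector_derivative f (Suc 0) t) (at t)" for t
      using f by metis
    then show "f (Suc 0) t \<noteq> 0" for t
      using \<gamma>(4) vector_derivative_at by metis
    show "(f (Suc 0) has_vector_derivative f (Suc (Suc 0)) t) (at t)" for t
      using f(2) .
    show "continuous_on UNIV (f (Suc (Suc 0)))"
      using f(2) has_vector_derivative_continuous by (blast intro: continuous_at_imp_continuous_on)
  qed (use assms \<gamma> in auto)
qed

context smooth_table
begin

lemma compact_table: "compact D"
  and strictly_convex_table: "strictly_convex D"
  and table_nonempty: "D \<noteq> {}"
  using table interior_subset by (auto simp: outer_billiard_table_def)

lemmas support_point = right_support_point[OF compact_table strictly_convex_table table_nonempty]

lemma continuous_on_curve: "continuous_on S \<gamma>"
  using curve_has_vector_derivative has_vector_derivative_continuous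
  by (blast intro: continuous_at_imp_continuous_on)

lemma continuous_on_tangent: "continuous_on S \<gamma>'"
  using tangent_has_vector_derivative has_vector_derivative_continuous
  by (blast intro: continuous_at_imp_continuous_on)

lemma curve_shift_int: "\<gamma> (t + of_int n) = \<gamma> t"
proof -
  have nat: "\<gamma> (s + of_nat m) = \<gamma> s" for s m
  proof (induction m)
    case (Suc m)
    have "\<gamma> (s + of_nat (Suc m)) = \<gamma> ((s + of_nat m) + 1)"
      by (simp add: algebra_simps)
    then show ?case
      using Suc curve_periodic by simp
  qed simp
  show ?thesis
  proof (cases "0 \<le> n")
    case True
    then show ?thesis
      using nat[of t "nat n"] by simp
  next
    case False
    then show ?thesis
      using nat[of "t + of_int n" "nat (- n)"] by simp
  qed
qed

lemma curve_frac: "\<gamma> (frac t) = \<gamma> t"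
  using curve_shift_int[of "frac t" "\<lfloor>t\<rfloor>"] by (simp add: frac_def)

lemma image_curve_interval: "\<gamma> ` {c..c + 1} = frontier D"
proof -
  have "\<gamma> s \<in> \<gamma> ` {a..a + 1}" for s a
  proof
    show "\<gamma> s = \<gamma> (s - of_int \<lfloor>s - a\<rfloor>)"
      using curve_shift_int[of "s - of_int \<lfloor>s - a\<rfloor>" "\<lfloor>s - a\<rfloor>"] by simp
    show "s - of_int \<lfloor>s - a\<rfloor> \<in> {a..a + 1}"
      unfolding atLeastAtMost_iff
      using of_int_floor_le[of "s - a"] real_of_int_floor_add_one_gt[of "s - a"] by linarith
  qed
  then have "\<gamma> ` {a..a + 1} = range \<gamma>" for a
    by blast
  from this[of c] this[of 0] show ?thesis
    using image_period by simp
qed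

lemma curve_in_frontier: "\<gamma> t \<in> frontier D"
  using image_curve_interval[of "t - 1"] by auto

lemma curve_eq_imp_eq:
  assumes "\<bar>s - s'\<bar> < 1" "\<gamma> s = \<gamma> s'"
  shows "s = s'"
proof -
  have "frac s \<in> {0..<1}" "frac s' \<in> {0..<1}"
    by (simp_all add: frac_lt_1)
  moreover have "\<gamma> (frac s) = \<gamma> (frac s')"
    using assms(2) by (simp add: curve_frac)
  ultimately have "frac s = frac s'"
    using inj_on_period by (simp add: inj_on_def)
  then have "s - s' = of_int (\<lfloor>s\<rfloor> - \<lfloor>s'\<rfloor>)"
    by (simp add: frac_def)
  moreover have "\<bar>\<lfloor>s\<rfloor> - \<lfloor>s'\<rfloor>\<bar> < 1"
    using assms(1) calculation by linarith
  ultimately show ?thesis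
    by simp
qed

lemma tangent_through_support_point:
  assumes "x \<notin> D" "right_support_point D x = \<gamma> t"
  shows "cross2 (\<gamma>' t) (\<gamma> t - x) = 0"
proof -
  define h where "h s = cross2 (\<gamma> t - x) (\<gamma> s - x)" for s
  have "h t \<le> h s" for s
    using support_point[OF assms(1)] curve_in_frontier[of s] frontier_subset_closed[of D]
      compact_imp_closed[OF compact_table]
    by (auto simp: h_def is_right_support_point_def assms(2))
  moreover have "(h has_real_derivative cross2 (\<gamma> t - x) (\<gamma>' t)) (at t)"
    using cross2.has_vector_derivative[OF has_vector_derivative_const
        has_vector_derivative_diff[OF curve_has_vector_derivative has_vector_derivative_const]]
    by (simp add: h_def[abs_def] has_real_derivative_iff_has_vector_derivative)
  ultimately have "cross2 (\<gamma> t - x) (\<gamma>' t) = 0"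
    using DERIV_local_min[of h _ t 1] by simp
  then show ?thesis
    by (simp add: cross2_skew[of "\<gamma>' t"])
qed

lemma support_point_tangent_line:
  assumes "x \<notin> D" "right_support_point D x = \<gamma> t"
  shows "x = \<gamma> t + (inner (x - \<gamma> t) (\<gamma>' t) / inner (\<gamma>' t) (\<gamma>' t)) *\<^sub>R \<gamma>' t"
    and "x \<noteq> \<gamma> t"
proof -
  have "cross2 (\<gamma>' t) (x - \<gamma> t) = 0"
    using tangent_through_support_point[OF assms] cross2.minus_right[of "\<gamma>' t" "x - \<gamma> t"] by simp
  then show "x = \<gamma> t + (inner (x - \<gamma> t) (\<gamma>' t) / inner (\<gamma>' t) (\<gamma>' t)) *\<^sub>R \<gamma>' t"
    using cross2_eq_0_imp_parallel[OF _ tangent_nonzero] by (metis add.commute diff_add_cancel)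
  show "x \<noteq> \<gamma> t"
    using support_point[OF assms(1)] assms by (auto simp: is_right_support_point_def)
qed

lemma frontier_near_curve_point:
  obtains d where "d > 0"
    "\<And>p. p \<in> frontier D \<Longrightarrow> dist p (\<gamma> t0) < d \<Longrightarrow> p \<in> \<gamma> ` {t0 - 1/4..t0 + 1/4}"
proof -
  let ?L = "{t0 + 1/4..t0 + 3/4}"
  have t0: "\<gamma> t0 \<notin> \<gamma> ` ?L"
  proof
    assume "\<gamma> t0 \<in> \<gamma> ` ?L"
    then obtain s where "s \<in> ?L" "\<gamma> t0 = \<gamma> s"
      by auto
    then show False
      using curve_eq_imp_eq[of t0 s] by auto
  qed
  have "closed (\<gamma> ` ?L)"
    by (intro compact_imp_closed compact_continuous_image continuous_on_curve compact_Icc)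
  from separate_point_closed[OF this t0]
  obtain d where d: "d > 0" "\<And>p. p \<in> \<gamma> ` ?L \<Longrightarrow> d \<le> dist (\<gamma> t0) p"
    by blast
  show thesis
  proof (rule that[OF \<open>d > 0\<close>])
    fix p assume p: "p \<in> frontier D" "dist p (\<gamma> t0) < d"
    then have "p \<in> \<gamma> ` {t0 - 1/4..t0 - 1/4 + 1}"
      by (simp only: image_curve_interval)
    then obtain s where s: "s \<in> {t0 - 1/4..t0 - 1/4 + 1}" "p = \<gamma> s"
      by blast
    have "s \<notin> ?L"
    proof
      assume "s \<in> ?L"
      then have "d \<le> dist (\<gamma> t0) p"
        using d(2) s(2) by blast
      then show False
        using p(2) by (simp add: dist_commute)
    qed
    then have "s \<in> {t0 - 1/4..t0 + 1/4}"
      using s(1) by auto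
    then show "p \<in> \<gamma> ` {t0 - 1/4..t0 + 1/4}"
      using s(2) by blast
  qed
qed

lemma local_support_param:
  assumes "open U" "x0 \<in> U" "U \<subseteq> - D"
  obtains N \<tau> where "open N" "x0 \<in> N" "N \<subseteq> U" "continuous_on N \<tau>"
    "\<And>x. x \<in> N \<Longrightarrow> \<gamma> (\<tau> x) = right_support_point D x"
    "\<And>x y. x \<in> N \<Longrightarrow> y \<in> N \<Longrightarrow> \<bar>\<tau> x - \<tau> y\<bar> < 1"
proof -
  let ?p = "right_support_point D"
  have "?p x0 \<in> frontier D"
    using right_support_point_in_frontier[OF compact_table strictly_convex_table table_nonempty]
      assms(2,3) by blast
  then obtain t0 where "?p x0 = \<gamma> t0"
    using image_curve_interval[of 0] by auto
  let ?K = "{t0 - 1/4..t0 + 1/4}"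
  obtain d where d: "d > 0" "\<And>p. p \<in> frontier D \<Longrightarrow> dist p (\<gamma> t0) < d \<Longrightarrow> p \<in> \<gamma> ` ?K"
    using frontier_near_curve_point by blast
  have inj: "inj_on \<gamma> ?K"
    by (rule inj_onI) (rule curve_eq_imp_eq; auto)
  define N where "N = U \<inter> ?p -` ball (\<gamma> t0) d"
  have cont: "continuous_on U ?p"
    using continuous_on_right_support_point[OF compact_table strictly_convex_table table_nonempty]
      assms(3) by (rule continuous_on_subset)
  have pK: "?p x \<in> \<gamma> ` ?K" if "x \<in> N" for x
    using that assms(3) d(2) right_support_point_in_frontier[OF compact_table strictly_convex_table
        table_nonempty] by (auto simp: N_def dist_commute)
  define \<tau> where "\<tau> x = the_inv_into ?K \<gamma> (?p x)" for x
  have near: "\<bar>\<tau> x - t0\<bar> \<le> 1/4" if "x \<in> N" for x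
    using the_inv_into_into[OF inj pK[OF that] subset_refl]
    unfolding \<tau>_def atLeastAtMost_iff abs_le_iff by linarith
  show thesis
  proof (rule that)
    show "open N"
      unfolding N_def using assms(1) by (intro continuous_open_preimage cont) auto
    show "x0 \<in> N" "N \<subseteq> U"
      using assms(2) \<open>?p x0 = \<gamma> t0\<close> d(1) by (auto simp: N_def)
    have inv: "continuous_on (\<gamma> ` ?K) (the_inv_into ?K \<gamma>)"
      using the_inv_into_f_f[OF inj] by (intro continuous_on_inv continuous_on_curve) auto
    have "continuous_on N ?p"
      using cont by (rule continuous_on_subset) (auto simp: N_def)
    then show "continuous_on N \<tau>"
      unfolding \<tau>_def[abs_def] by (rule continuous_on_compose2[OF inv]) (use pK in blast)
    show "\<gamma> (\<tau> x) = ?p x" if "x \<in> N" for x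
      unfolding \<tau>_def using f_the_inv_into_f[OF inj pK[OF that]] .
    show "\<bar>\<tau> x - \<tau> y\<bar> < 1" if "x \<in> N" "y \<in> N" for x y
      using near[OF that(1)] near[OF that(2)] by linarith
  qed
qed

lemma curvature_not_identically_zero:
  assumes "a < b"
  shows "\<exists>t\<in>{a..b}. cross2 (\<gamma>' t) (\<gamma>'' t) \<noteq> 0"
proof (rule ccontr)
  assume curvature_zero: "\<not> ?thesis"
  define b' where "b' = min b (a + 1/2)"
  define m where "m = (a + b') / 2"
  have ab': "a < b'" "b' - a < 1" "{a..b'} \<subseteq> {a..b}"
    using assms by (auto simp: b'_def)
  then have flat: "\<forall>t\<in>{a..b'}. cross2 (\<gamma>' t) (\<gamma>'' t) = 0"
    using curvature_zero by blast
  have on_line: "cross2 (\<gamma>' a) (\<gamma> t - \<gamma> a) = 0" if "t \<in> {a..b'}" for t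
    using cross2_eq_0_if_curvature_eq_0[OF tangent_has_vector_derivative tangent_nonzero flat]
    by (intro cross2_eq_0_if_derivative_cross2_eq_0[OF curve_has_vector_derivative _ that]) simp
  have "collinear {\<gamma> a, \<gamma> m, \<gamma> b'}"
    using on_line ab' by (intro collinear_if_cross2_eq_0[where p = "\<gamma> a", OF tangent_nonzero[of a]])
      (auto simp: m_def)
  moreover have "\<gamma> a \<noteq> \<gamma> m" "\<gamma> m \<noteq> \<gamma> b'" "\<gamma> b' \<noteq> \<gamma> a"
    using curve_eq_imp_eq[of a m] curve_eq_imp_eq[of m b'] curve_eq_imp_eq[of b' a] ab'
    by (auto simp: m_def)
  ultimately show False
    using strictly_convex_frontier_not_collinear[OF compact_imp_closed[OF compact_table]
        strictly_convex_table curve_in_frontier curve_in_frontier curve_in_frontier]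
    by blast
qed

lemma has_derivative_tangent_chart:
  "((\<lambda>w. \<gamma> (fst w) + snd w *\<^sub>R \<gamma>' (fst w)) has_derivative
     (\<lambda>h. fst h *\<^sub>R (\<gamma>' t + \<mu> *\<^sub>R \<gamma>'' t) + snd h *\<^sub>R \<gamma>' t)) (at (t, \<mu>))"
proof -
  have "((\<lambda>w. \<gamma> (fst w) + snd w *\<^sub>R \<gamma>' (fst w)) has_derivative
     (\<lambda>h. fst h *\<^sub>R \<gamma>' t + (\<mu> *\<^sub>R (fst h *\<^sub>R \<gamma>'' t) + snd h *\<^sub>R \<gamma>' t))) (at (t, \<mu>))"
    using curve_has_vector_derivative[of t] tangent_has_vector_derivative[of t]
    unfolding has_vector_derivative_def
    by (auto intro!: derivative_eq_intros diff_chain_at[where f = fst and g = \<gamma>, unfolded o_def]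
        diff_chain_at[where f = fst and g = \<gamma>', unfolded o_def])
  then show ?thesis
    by (simp add: algebra_simps)
qed

lemma support_param_differentiable:
  assumes "open N" "N \<subseteq> - D" "continuous_on N \<tau>"
    and param: "\<And>y. y \<in> N \<Longrightarrow> \<gamma> (\<tau> y) = right_support_point D y"
    and "x \<in> N" "cross2 (\<gamma>' (\<tau> x)) (\<gamma>'' (\<tau> x)) \<noteq> 0"
  shows "\<tau> differentiable (at x)"
proof -
  \<comment> \<open>Each y in N is the image of (\<tau> y, \<mu> y) under the chart (t, s) \<mapsto> \<gamma> t + s \<gamma>' t,
    whose derivative is invertible wherever the curvature does not vanish.\<close>
  define \<mu> where "\<mu> y = inner (y - \<gamma> (\<tau> y)) (\<gamma>' (\<tau> y)) / inner (\<gamma>' (\<tau> y)) (\<gamma>' (\<tau> y))" for y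
  define \<Psi> where "\<Psi> w = \<gamma> (fst w) + snd w *\<^sub>R \<gamma>' (fst w)" for w :: "real \<times> real"
  have support: "y \<notin> D" "right_support_point D y = \<gamma> (\<tau> y)" if "y \<in> N" for y
    using param that assms(2) by auto
  have chart: "\<Psi> (\<tau> y, \<mu> y) = y" if "y \<in> N" for y
    using support_point_tangent_line(1)[OF support[OF that]] by (simp add: \<Psi>_def \<mu>_def)
  have "continuous_on N (\<lambda>y. (\<tau> y, \<mu> y))"
    unfolding \<mu>_def using tangent_nonzero
    by (intro continuous_intros assms(3) continuous_on_compose2[OF continuous_on_curve assms(3)]
        continuous_on_compose2[OF continuous_on_tangent assms(3)]) auto
  then have cont: "continuous (at x) (\<lambda>y. (\<tau> y, \<mu> y))"
    using assms(1,5) continuous_on_eq_continuous_at by blast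
  have "\<mu> x \<noteq> 0"
    using chart[OF assms(5)] support_point_tangent_line(2)[OF support[OF assms(5)]]
    by (auto simp: \<Psi>_def)
  then have "cross2 (\<gamma>' (\<tau> x) + \<mu> x *\<^sub>R \<gamma>'' (\<tau> x)) (\<gamma>' (\<tau> x)) \<noteq> 0"
    using assms(6) by (simp add: cross2.add_left cross2.scaleR_left cross2_skew[of "\<gamma>'' _"])
  then obtain g where g: "bounded_linear g"
    "g \<circ> (\<lambda>h. fst h *\<^sub>R (\<gamma>' (\<tau> x) + \<mu> x *\<^sub>R \<gamma>'' (\<tau> x)) + snd h *\<^sub>R \<gamma>' (\<tau> x)) = id"
    using exists_left_inverse_pair_combination by blast
  have "((\<lambda>y. (\<tau> y, \<mu> y)) has_derivative g) (at x)"
    using has_derivative_tangent_chart[of "\<tau> x" "\<mu> x", folded \<Psi>_def[abs_def]]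
    by (intro has_derivative_inverse_basic[OF _ g cont assms(1,5) chart]) auto
  from has_derivative_fst[OF this] have "(\<tau> has_derivative (\<lambda>h. fst (g h))) (at x)"
    by simp
  then show ?thesis
    unfolding differentiable_def by blast
qed

lemma exists_curvature_nonzero:
  assumes "open U" "U \<noteq> {}" "U \<subseteq> - D" "continuous_on U \<tau>"
    and param: "\<And>x. x \<in> U \<Longrightarrow> \<gamma> (\<tau> x) = right_support_point D x"
  shows "\<exists>x\<in>U. cross2 (\<gamma>' (\<tau> x)) (\<gamma>'' (\<tau> x)) \<noteq> 0"
proof (rule ccontr)
  assume flat: "\<not> ?thesis"
  obtain x e where e: "e > 0" "ball x e \<subseteq> U"
    using assms(1,2) open_contains_ball by blast
  show False
  proof (cases "\<exists>y\<in>ball x e. \<tau> y \<noteq> \<tau> x")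
    case True
    then obtain y where y: "y \<in> ball x e" "\<tau> y \<noteq> \<tau> x"
      by blast
    have "connected (\<tau> ` ball x e)"
      using continuous_on_subset[OF assms(4) e(2)] by (intro connected_continuous_image) auto
    then have "{min (\<tau> x) (\<tau> y)..max (\<tau> x) (\<tau> y)} \<subseteq> \<tau> ` ball x e"
      using y(1) e(1) by (intro connected_contains_Icc) (auto simp: min_def max_def)
    then have "\<forall>t\<in>{min (\<tau> x) (\<tau> y)..max (\<tau> x) (\<tau> y)}. cross2 (\<gamma>' t) (\<gamma>'' t) = 0"
      using flat e(2) by blast
    moreover have "min (\<tau> x) (\<tau> y) < max (\<tau> x) (\<tau> y)"
      using y(2) by (simp add: min_def max_def)
    ultimately show False
      using curvature_not_identically_zero by blast
  next
    case False
    have "collinear (ball x e)"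
    proof (rule collinear_if_cross2_eq_0[OF tangent_nonzero[of "\<tau> x"], where p = "\<gamma> (\<tau> x)"])
      fix y assume "y \<in> ball x e"
      then have "cross2 (\<gamma>' (\<tau> x)) (\<gamma> (\<tau> x) - y) = 0"
        using False e(2) assms(3) param by (metis tangent_through_support_point ComplD subsetD)
      then show "cross2 (\<gamma>' (\<tau> x)) (y - \<gamma> (\<tau> x)) = 0"
        using cross2.minus_right[of "\<gamma>' (\<tau> x)" "y - \<gamma> (\<tau> x)"] by simp
    qed
    then show False
      using e(1) by (simp add: collinear_aff_dim aff_dim_open)
  qed
qed

text \<open>The last condition keeps the parameters within less than one period, so that the support
  point determines its parameter.\<close>
definition regular_param :: "(real^2) set \<Rightarrow> (real^2 \<Rightarrow> real) \<Rightarrow> bool" where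
  "regular_param V \<tau> \<longleftrightarrow> V \<subseteq> - D \<and>
     (\<forall>x\<in>V. \<gamma> (\<tau> x) = right_support_point D x \<and> cross2 (\<gamma>' (\<tau> x)) (\<gamma>'' (\<tau> x)) \<noteq> 0 \<and>
        \<tau> differentiable (at x)) \<and>
     (\<forall>x\<in>V. \<forall>y\<in>V. \<bar>\<tau> x - \<tau> y\<bar> < 1)"

lemma regular_param_subset: "regular_param V \<tau> \<Longrightarrow> V' \<subseteq> V \<Longrightarrow> regular_param V' \<tau>"
  unfolding regular_param_def by blast

lemma exists_regular_param:
  assumes "open U" "U \<noteq> {}" "U \<subseteq> - D"
  obtains V \<tau> where "open V" "V \<noteq> {}" "V \<subseteq> U" "regular_param V \<tau>"
proof -
  obtain x0 where "x0 \<in> U"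
    using assms(2) by blast
  then obtain N \<tau> where N: "open N" "x0 \<in> N" "N \<subseteq> U" "continuous_on N \<tau>"
    and param: "\<And>x. x \<in> N \<Longrightarrow> \<gamma> (\<tau> x) = right_support_point D x"
    and window: "\<And>x y. x \<in> N \<Longrightarrow> y \<in> N \<Longrightarrow> \<bar>\<tau> x - \<tau> y\<bar> < 1"
    using local_support_param[OF assms(1) \<open>x0 \<in> U\<close> assms(3)] by blast
  define curv where "curv x = cross2 (\<gamma>' (\<tau> x)) (\<gamma>'' (\<tau> x))" for x
  define V where "V = N \<inter> curv -` (- {0})"
  have "N \<subseteq> - D"
    using N(3) assms(3) by blast
  have "continuous_on N curv"
    unfolding curv_def
    by (intro continuous_on_cross2 continuous_on_compose2[OF continuous_on_tangent N(4)]
        continuous_on_compose2[OF continuous_on_acceleration N(4)]) auto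
  then have "open V"
    unfolding V_def using N(1) by (intro continuous_open_preimage) auto
  moreover obtain x1 where "x1 \<in> N" "curv x1 \<noteq> 0"
    using exists_curvature_nonzero[OF N(1) _ \<open>N \<subseteq> - D\<close> N(4) param] N(2)
    unfolding curv_def by blast
  then have "V \<noteq> {}"
    by (auto simp: V_def)
  moreover have "regular_param V \<tau>"
    unfolding regular_param_def
  proof (intro conjI ballI)
    show "V \<subseteq> - D"
      using \<open>N \<subseteq> - D\<close> by (auto simp: V_def)
    fix x assume "x \<in> V"
    then show "\<gamma> (\<tau> x) = right_support_point D x" "cross2 (\<gamma>' (\<tau> x)) (\<gamma>'' (\<tau> x)) \<noteq> 0"
      using param by (auto simp: V_def curv_def)
    show "\<tau> differentiable (at x)"
      using \<open>x \<in> V\<close> support_param_differentiable[OF N(1) \<open>N \<subseteq> - D\<close> N(4) param]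
      by (auto simp: V_def curv_def)
    show "\<bar>\<tau> x - \<tau> y\<bar> < 1" if "y \<in> V" for y
      using window \<open>x \<in> V\<close> that by (auto simp: V_def)
  qed
  ultimately show thesis
    using that N(3) by (auto simp: V_def)
qed

lemma exists_regular_param_in_image:
  assumes "compact D0" "strictly_convex D0" "D0 \<noteq> {}"
    and "open V" "V \<noteq> {}" "V \<subseteq> - D0" "outer_billiard D0 ` V \<subseteq> - D"
  obtains V' \<tau> where "open V'" "V' \<noteq> {}" "V' \<subseteq> outer_billiard D0 ` V" "regular_param V' \<tau>"
proof (rule exists_regular_param)
  show "open (outer_billiard D0 ` V)"
    by (rule open_image_outer_billiard[OF assms(1-4,6)])
  show "outer_billiard D0 ` V \<noteq> {}"
    using assms(5) by blast
qed (use assms(7) that in blast)+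

lemma regular_param_differentiable_comp:
  assumes "regular_param V \<tau>" "open W" "x \<in> W" "\<phi> ` W \<subseteq> V" "\<phi> differentiable (at x)"
  shows "(\<lambda>y. \<tau> (\<phi> y)) differentiable (at x)"
    and "(\<lambda>y. outer_billiard D (\<phi> y)) differentiable (at x)"
proof -
  have "\<phi> x \<in> V"
    using assms(3,4) by blast
  then show "(\<lambda>y. \<tau> (\<phi> y)) differentiable (at x)"
    using differentiable_chain_at[OF assms(5), of \<tau>] assms(1) by (simp add: regular_param_def o_def)
  then obtain L where L: "((\<lambda>y. \<tau> (\<phi> y)) has_derivative L) (at x)"
    unfolding differentiable_def by blast
  obtain P where P: "(\<phi> has_derivative P) (at x)"
    using assms(5) unfolding differentiable_def by blast
  have "((\<lambda>y. 2 *\<^sub>R \<gamma> (\<tau> (\<phi> y)) - \<phi> y) has_derivative (\<lambda>h. 2 *\<^sub>R (L h *\<^sub>R \<gamma>' (\<tau> (\<phi> x))) - P h)) (at x)"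
    by (intro has_derivative_diff has_derivative_scaleR_right
        has_derivative_compose_curve[OF curve_has_vector_derivative L] P)
  then have "((\<lambda>y. outer_billiard D (\<phi> y)) has_derivative
      (\<lambda>h. 2 *\<^sub>R (L h *\<^sub>R \<gamma>' (\<tau> (\<phi> x))) - P h)) (at x)"
    by (rule has_derivative_transform_within_open[OF _ assms(2,3)])
      (use assms(1,4) in \<open>auto simp: regular_param_def outer_billiard_def\<close>)
  then show "(\<lambda>y. outer_billiard D (\<phi> y)) differentiable (at x)"
    unfolding differentiable_def by blast
qed

lemma regular_param_along_ray:
  assumes "regular_param V \<tau>" "x \<in> V" "x + s *\<^sub>R (\<gamma> (\<tau> x) - x) \<in> V" "s < 1"
  shows "\<tau> (x + s *\<^sub>R (\<gamma> (\<tau> x) - x)) = \<tau> x"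
proof -
  let ?x' = "x + s *\<^sub>R (\<gamma> (\<tau> x) - x)"
  have "x \<notin> D" "?x' \<notin> D" "right_support_point D x = \<gamma> (\<tau> x)"
    using assms(1-3) by (auto simp: regular_param_def)
  then have "is_right_support_point D ?x' (\<gamma> (\<tau> x))"
    using is_right_support_point_along_ray[OF support_point[OF \<open>x \<notin> D\<close>] assms(4)] by simp
  then have "\<gamma> (\<tau> ?x') = \<gamma> (\<tau> x)"
    using right_support_point_eqI[OF strictly_convex_table \<open>?x' \<notin> D\<close>] assms(1,3)
    by (simp add: regular_param_def)
  moreover have "\<bar>\<tau> ?x' - \<tau> x\<bar> < 1"
    using assms(1-3) by (simp add: regular_param_def)
  ultimately show ?thesis
    using curve_eq_imp_eq by blast
qed

end

section \<open>Three tables\<close>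

locale three_tables =
  first: smooth_table D1 \<alpha> \<alpha>' \<alpha>'' + second: smooth_table D2 \<beta> \<beta>' \<beta>'' +
  third: smooth_table D3 \<gamma> \<gamma>' \<gamma>''
  for D1 \<alpha> \<alpha>' \<alpha>'' D2 \<beta> \<beta>' \<beta>'' D3 \<gamma> \<gamma>' \<gamma>''
begin

abbreviation "T1 \<equiv> outer_billiard D1"
abbreviation "T2 \<equiv> outer_billiard D2"
abbreviation "T3 \<equiv> outer_billiard D3"

definition regular_fixed_region ::
    "(real^2) set \<Rightarrow> (real^2 \<Rightarrow> real) \<Rightarrow> (real^2 \<Rightarrow> real) \<Rightarrow> (real^2 \<Rightarrow> real) \<Rightarrow> bool" where
  "regular_fixed_region W \<tau>1 \<tau>2 \<tau>3 \<longleftrightarrow> open W \<and> W \<noteq> {} \<and> (\<forall>x\<in>W. T3 (T2 (T1 x)) = x) \<and>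
     first.regular_param W \<tau>1 \<and> second.regular_param (T1 ` W) \<tau>2 \<and>
     third.regular_param (T2 ` T1 ` W) \<tau>3"

definition triangle_area :: "(real^2 \<Rightarrow> real) \<Rightarrow> (real^2 \<Rightarrow> real) \<Rightarrow> (real^2 \<Rightarrow> real) \<Rightarrow> real^2 \<Rightarrow> real"
  where "triangle_area \<tau>1 \<tau>2 \<tau>3 x =
    cross2 (\<gamma> (\<tau>3 (T2 (T1 x))) - \<alpha> (\<tau>1 x)) (\<alpha> (\<tau>1 x) - \<beta> (\<tau>2 (T1 x)))"

lemma exists_regular_fixed_region:
  assumes "open U" "U \<noteq> {}"
    and "\<forall>x\<in>U. x \<notin> D1 \<and> T1 x \<notin> D2 \<and> T2 (T1 x) \<notin> D3 \<and> T3 (T2 (T1 x)) = x"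
  obtains W \<tau>1 \<tau>2 \<tau>3 where "regular_fixed_region W \<tau>1 \<tau>2 \<tau>3"
proof -
  have U: "U \<subseteq> - D1" "T1 ` U \<subseteq> - D2" "T2 ` T1 ` U \<subseteq> - D3"
    using assms(3) by auto
  obtain V1 \<tau>1 where V1: "open V1" "V1 \<noteq> {}" "V1 \<subseteq> U" "first.regular_param V1 \<tau>1"
    by (rule first.exists_regular_param[OF assms(1,2) U(1)])
  have "V1 \<subseteq> - D1" "T1 ` V1 \<subseteq> - D2"
    using V1(3) U by auto
  then obtain V2 \<tau>2 where V2: "open V2" "V2 \<noteq> {}" "V2 \<subseteq> T1 ` V1" "second.regular_param V2 \<tau>2"
    by (rule second.exists_regular_param_in_image[OF first.compact_table first.strictly_convex_table
          first.table_nonempty V1(1,2)])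
  have "V2 \<subseteq> - D2"
    using V2(4) by (simp add: second.regular_param_def)
  moreover have "T2 ` V2 \<subseteq> - D3"
    using image_mono[OF V2(3), of T2] image_mono[OF image_mono[OF V1(3), of T1], of T2] U(3)
    by blast
  ultimately obtain V3 \<tau>3 where V3: "open V3" "V3 \<noteq> {}" "V3 \<subseteq> T2 ` V2" "third.regular_param V3 \<tau>3"
    by (rule third.exists_regular_param_in_image[OF second.compact_table second.strictly_convex_table
          second.table_nonempty V2(1,2)])
  define W where "W = V1 \<inter> T1 -` (V2 \<inter> T2 -` V3)"
  have "open (V2 \<inter> T2 -` V3)"
    by (rule open_vimage_outer_billiard[OF second.compact_table second.strictly_convex_table
          second.table_nonempty V2(1) \<open>V2 \<subseteq> - D2\<close> V3(1)])
  then have "open W"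
    unfolding W_def by (rule open_vimage_outer_billiard[OF first.compact_table
          first.strictly_convex_table first.table_nonempty V1(1) \<open>V1 \<subseteq> - D1\<close>])
  obtain x where "x \<in> V1" "T1 x \<in> V2" "T2 (T1 x) \<in> V3"
    using V2(3) V3(2,3) by blast
  then have "W \<noteq> {}"
    by (auto simp: W_def)
  have "W \<subseteq> V1" "T1 ` W \<subseteq> V2" "T2 ` T1 ` W \<subseteq> V3"
    by (auto simp: W_def)
  have "regular_fixed_region W \<tau>1 \<tau>2 \<tau>3"
    unfolding regular_fixed_region_def
  proof (intro conjI ballI)
    show "T3 (T2 (T1 x)) = x" if "x \<in> W" for x
      using that \<open>W \<subseteq> V1\<close> V1(3) assms(3) by blast
    show "first.regular_param W \<tau>1"
      by (rule first.regular_param_subset[OF V1(4) \<open>W \<subseteq> V1\<close>])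
    show "second.regular_param (T1 ` W) \<tau>2"
      by (rule second.regular_param_subset[OF V2(4) \<open>T1 ` W \<subseteq> V2\<close>])
    show "third.regular_param (T2 ` T1 ` W) \<tau>3"
      by (rule third.regular_param_subset[OF V3(4) \<open>T2 ` T1 ` W \<subseteq> V3\<close>])
  qed fact+
  then show thesis
    by (rule that)
qed

lemma regular_fixed_region_triangle:
  assumes "regular_fixed_region W \<tau>1 \<tau>2 \<tau>3" "x \<in> W"
  defines "a \<equiv> \<alpha> (\<tau>1 x)" and "b \<equiv> \<beta> (\<tau>2 (T1 x))" and "c \<equiv> \<gamma> (\<tau>3 (T2 (T1 x)))"
  shows "x = a - b + c" "a - x = b - c"
    and "cross2 (\<alpha>' (\<tau>1 x)) (b - c) = 0" "cross2 (\<beta>' (\<tau>2 (T1 x))) (c - a) = 0"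
    "cross2 (\<gamma>' (\<tau>3 (T2 (T1 x)))) (a - b) = 0"
    and "a \<noteq> b" "b \<noteq> c" "c \<noteq> a"
proof -
  have in1: "x \<notin> D1" "right_support_point D1 x = a"
    using assms(1,2) by (auto simp: regular_fixed_region_def first.regular_param_def a_def)
  have in2: "T1 x \<notin> D2" "right_support_point D2 (T1 x) = b"
    using assms(1,2) by (auto simp: regular_fixed_region_def second.regular_param_def b_def)
  have in3: "T2 (T1 x) \<notin> D3" "right_support_point D3 (T2 (T1 x)) = c"
    using assms(1,2) by (auto simp: regular_fixed_region_def third.regular_param_def c_def)
  have "a \<in> D1" "b \<in> D2" "c \<in> D3"
    using first.support_point[OF in1(1)] second.support_point[OF in2(1)]
      third.support_point[OF in3(1)] in1(2) in2(2) in3(2)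
    by (auto simp: is_right_support_point_def)
  have T: "T1 x = 2 *\<^sub>R a - x" "T2 (T1 x) = 2 *\<^sub>R b - (2 *\<^sub>R a - x)"
    using in1(2) in2(2) by (simp_all add: outer_billiard_def)
  moreover have "T3 (T2 (T1 x)) = x"
    using assms(1,2) by (simp add: regular_fixed_region_def)
  ultimately have fixed: "2 *\<^sub>R c - (2 *\<^sub>R b - (2 *\<^sub>R a - x)) = x"
    using in3(2) by (simp add: outer_billiard_def)
  note sides = three_reflections_fixed_point[OF fixed]
  show "x = a - b + c" "a - x = b - c"
    by (rule sides(1,2))+
  show "cross2 (\<alpha>' (\<tau>1 x)) (b - c) = 0"
    using first.tangent_through_support_point[OF in1(1) in1(2)[unfolded a_def]] sides(2)
    by (simp add: a_def)
  show "cross2 (\<beta>' (\<tau>2 (T1 x))) (c - a) = 0"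
    using second.tangent_through_support_point[OF in2(1) in2(2)[unfolded b_def]] sides(3) T(1)
    by (simp add: b_def)
  show "cross2 (\<gamma>' (\<tau>3 (T2 (T1 x)))) (a - b) = 0"
    using third.tangent_through_support_point[OF in3(1) in3(2)[unfolded c_def]] sides(4) T(2)
    by (simp add: c_def)
  show "b \<noteq> c"
    using sides(2) \<open>a \<in> D1\<close> in1(1) by auto
  show "c \<noteq> a"
    using sides(3) \<open>b \<in> D2\<close> in2(1) T(1) by auto
  show "a \<noteq> b"
    using sides(4) \<open>c \<in> D3\<close> in3(1) T(2) by auto
qed

lemma regular_fixed_region_vertices_has_derivative:
  assumes "regular_fixed_region W \<tau>1 \<tau>2 \<tau>3" "x \<in> W"
  obtains L1 L2 L3 where
    "((\<lambda>y. \<alpha> (\<tau>1 y)) has_derivative (\<lambda>h. L1 h *\<^sub>R \<alpha>' (\<tau>1 x))) (at x)"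
    "((\<lambda>y. \<alpha>' (\<tau>1 y)) has_derivative (\<lambda>h. L1 h *\<^sub>R \<alpha>'' (\<tau>1 x))) (at x)"
    "((\<lambda>y. \<beta> (\<tau>2 (T1 y))) has_derivative (\<lambda>h. L2 h *\<^sub>R \<beta>' (\<tau>2 (T1 x)))) (at x)"
    "((\<lambda>y. \<beta>' (\<tau>2 (T1 y))) has_derivative (\<lambda>h. L2 h *\<^sub>R \<beta>'' (\<tau>2 (T1 x)))) (at x)"
    "((\<lambda>y. \<gamma> (\<tau>3 (T2 (T1 y)))) has_derivative (\<lambda>h. L3 h *\<^sub>R \<gamma>' (\<tau>3 (T2 (T1 x))))) (at x)"
proof -
  note R = assms(1)[unfolded regular_fixed_region_def]
  have "\<tau>1 differentiable (at x)"
    using R assms(2) by (simp add: first.regular_param_def)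
  moreover have T1: "T1 differentiable (at x)"
    using first.regular_param_differentiable_comp(2)[of W \<tau>1 W x "\<lambda>y. y"] R assms(2) by simp
  then have "(\<lambda>y. \<tau>2 (T1 y)) differentiable (at x)"
    using second.regular_param_differentiable_comp(1)[of "T1 ` W" \<tau>2 W x T1] R assms(2) by simp
  moreover have "(\<lambda>y. T2 (T1 y)) differentiable (at x)"
    using second.regular_param_differentiable_comp(2)[of "T1 ` W" \<tau>2 W x T1] T1 R assms(2) by simp
  then have "(\<lambda>y. \<tau>3 (T2 (T1 y))) differentiable (at x)"
    using third.regular_param_differentiable_comp(1)[of "T2 ` T1 ` W" \<tau>3 W x "\<lambda>y. T2 (T1 y)"]
      R assms(2) by (simp add: image_image)
  ultimately obtain L1 L2 L3 where "(\<tau>1 has_derivative L1) (at x)"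
    "((\<lambda>y. \<tau>2 (T1 y)) has_derivative L2) (at x)" "((\<lambda>y. \<tau>3 (T2 (T1 y))) has_derivative L3) (at x)"
    unfolding differentiable_def by blast
  then show thesis
    by (intro that has_derivative_compose_curve first.curve_has_vector_derivative
        first.tangent_has_vector_derivative second.curve_has_vector_derivative
        second.tangent_has_vector_derivative third.curve_has_vector_derivative)
qed

lemma regular_fixed_region_area:
  assumes "regular_fixed_region W \<tau>1 \<tau>2 \<tau>3" "x \<in> W"
  shows "(triangle_area \<tau>1 \<tau>2 \<tau>3 has_derivative (\<lambda>h. 0)) (at x)"
    and "\<alpha> (\<tau>1 x) - x = \<mu> *\<^sub>R \<alpha>' (\<tau>1 x) \<Longrightarrow> triangle_area \<tau>1 \<tau>2 \<tau>3 x \<noteq> 0 \<and>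
      \<mu> ^ 3 * cross2 (\<alpha>'' (\<tau>1 x)) (\<alpha>' (\<tau>1 x)) = triangle_area \<tau>1 \<tau>2 \<tau>3 x"
proof -
  define a where "a y = \<alpha> (\<tau>1 y)" for y
  define b where "b y = \<beta> (\<tau>2 (T1 y))" for y
  define c where "c y = \<gamma> (\<tau>3 (T2 (T1 y)))" for y
  have area: "triangle_area \<tau>1 \<tau>2 \<tau>3 = (\<lambda>y. cross2 (c y - a y) (a y - b y))"
    by (simp add: fun_eq_iff triangle_area_def a_def b_def c_def)
  have sum: "y = a y - b y + c y" and side: "a y - y = b y - c y"
    and tan: "cross2 (\<alpha>' (\<tau>1 y)) (b y - c y) = 0" "cross2 (\<beta>' (\<tau>2 (T1 y))) (c y - a y) = 0"
      "cross2 (\<gamma>' (\<tau>3 (T2 (T1 y)))) (a y - b y) = 0"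
    and distinct: "a y \<noteq> b y" "b y \<noteq> c y" "c y \<noteq> a y"
    if "y \<in> W" for y
    using regular_fixed_region_triangle[OF assms(1) that] by (simp_all add: a_def b_def c_def)
  obtain L1 L2 L3 where da: "(a has_derivative (\<lambda>h. L1 h *\<^sub>R \<alpha>' (\<tau>1 x))) (at x)"
    and du1: "((\<lambda>y. \<alpha>' (\<tau>1 y)) has_derivative (\<lambda>h. L1 h *\<^sub>R \<alpha>'' (\<tau>1 x))) (at x)"
    and db: "(b has_derivative (\<lambda>h. L2 h *\<^sub>R \<beta>' (\<tau>2 (T1 x)))) (at x)"
    and du2: "((\<lambda>y. \<beta>' (\<tau>2 (T1 y))) has_derivative (\<lambda>h. L2 h *\<^sub>R \<beta>'' (\<tau>2 (T1 x)))) (at x)"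
    and dc: "(c has_derivative (\<lambda>h. L3 h *\<^sub>R \<gamma>' (\<tau>3 (T2 (T1 x))))) (at x)"
    using regular_fixed_region_vertices_has_derivative[OF assms] unfolding a_def b_def c_def by metis
  show "(triangle_area \<tau>1 \<tau>2 \<tau>3 has_derivative (\<lambda>h. 0)) (at x)"
    unfolding area by (rule triangle_area_has_derivative_zero[OF da db dc tan[OF assms(2)]])
  have "open W"
    using assms(1) by (simp add: regular_fixed_region_def)
  note M = tangency_second_order_relations[OF this assms(2) da du1 db du2 dc sum tan(1,2)]
  have curv: "cross2 (\<alpha>' (\<tau>1 x)) (\<alpha>'' (\<tau>1 x)) \<noteq> 0" "cross2 (\<beta>' (\<tau>2 (T1 x))) (\<beta>'' (\<tau>2 (T1 x))) \<noteq> 0"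
    using assms(1,2)
    by (auto simp: regular_fixed_region_def first.regular_param_def second.regular_param_def)
  show "triangle_area \<tau>1 \<tau>2 \<tau>3 x \<noteq> 0 \<and>
      \<mu> ^ 3 * cross2 (\<alpha>'' (\<tau>1 x)) (\<alpha>' (\<tau>1 x)) = triangle_area \<tau>1 \<tau>2 \<tau>3 x"
    if "\<alpha> (\<tau>1 x) - x = \<mu> *\<^sub>R \<alpha>' (\<tau>1 x)"
  proof -
    have "b x - c x = \<mu> *\<^sub>R \<alpha>' (\<tau>1 x)"
      using side[OF assms(2)] that by (simp add: a_def)
    from triangle_area_eq_cube[OF distinct[OF assms(2)] second.tangent_nonzero third.tangent_nonzero
        this tan(2,3)[OF assms(2)] curv M]
    show ?thesis
      unfolding area by blast
  qed
qed

lemma triangle_area_locally_constant: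
  assumes "regular_fixed_region W \<tau>1 \<tau>2 \<tau>3" "x \<in> W"
  obtains r where "r > 0" "ball x r \<subseteq> W"
    "\<And>y. y \<in> ball x r \<Longrightarrow> triangle_area \<tau>1 \<tau>2 \<tau>3 y = triangle_area \<tau>1 \<tau>2 \<tau>3 x"
proof -
  obtain r where r: "r > 0" "ball x r \<subseteq> W"
    using assms unfolding regular_fixed_region_def open_contains_ball by blast
  have "\<exists>k. \<forall>y\<in>ball x r. triangle_area \<tau>1 \<tau>2 \<tau>3 y = k"
    using regular_fixed_region_area(1)[OF assms(1)] r(2)
    by (intro has_derivative_zero_constant[OF convex_ball]) (blast intro: has_derivative_at_withinI)
  then obtain k where "\<forall>y\<in>ball x r. triangle_area \<tau>1 \<tau>2 \<tau>3 y = k"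
    by blast
  then show thesis
    using r(1) by (intro that[OF r]) simp
qed

text \<open>Moving x towards its first support point keeps that point and the locally constant area
  fixed, but scales the tangent coordinate \<mu> of x.\<close>
lemma no_regular_fixed_region: "\<not> regular_fixed_region W \<tau>1 \<tau>2 \<tau>3"
proof
  assume R: "regular_fixed_region W \<tau>1 \<tau>2 \<tau>3"
  let ?C = "triangle_area \<tau>1 \<tau>2 \<tau>3"
  obtain x0 where "x0 \<in> W"
    using R by (auto simp: regular_fixed_region_def)
  then obtain r where r: "r > 0" "ball x0 r \<subseteq> W" "\<And>y. y \<in> ball x0 r \<Longrightarrow> ?C y = ?C x0"
    using triangle_area_locally_constant[OF R] by blast
  define p where "p = \<alpha> (\<tau>1 x0)"
  define v where "v = \<alpha>' (\<tau>1 x0)"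
  let ?K = "cross2 (\<alpha>'' (\<tau>1 x0)) v"
  have reg1: "first.regular_param W \<tau>1"
    using R by (simp add: regular_fixed_region_def)
  then have "x0 \<notin> D1" "right_support_point D1 x0 = \<alpha> (\<tau>1 x0)"
    using \<open>x0 \<in> W\<close> by (auto simp: first.regular_param_def)
  from first.tangent_through_support_point[OF this] obtain \<mu> where \<mu>: "p - x0 = \<mu> *\<^sub>R v"
    using cross2_eq_0_imp_parallel[OF _ first.tangent_nonzero] unfolding p_def v_def by blast
  obtain s where s: "0 < s" "s < 1" and "x0 + s *\<^sub>R (p - x0) \<in> ball x0 r"
    using exists_segment_point_in_ball[OF r(1)] by blast
  define x' where "x' = x0 + s *\<^sub>R (p - x0)"
  have "x' \<in> ball x0 r"
    unfolding x'_def by fact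
  then have "x' \<in> W" "\<tau>1 x' = \<tau>1 x0"
    using first.regular_param_along_ray[OF reg1 \<open>x0 \<in> W\<close> _ s(2)] r(2) by (auto simp: x'_def p_def)
  have x'_tangent: "\<alpha> (\<tau>1 x') - x' = ((1 - s) * \<mu>) *\<^sub>R \<alpha>' (\<tau>1 x')"
  proof -
    have "\<alpha> (\<tau>1 x') - x' = (1 - s) *\<^sub>R (p - x0)"
      using \<open>\<tau>1 x' = \<tau>1 x0\<close> by (simp add: x'_def p_def algebra_simps)
    then show ?thesis
      using \<mu> \<open>\<tau>1 x' = \<tau>1 x0\<close> by (simp add: v_def)
  qed
  have "?C x0 \<noteq> 0" "\<mu> ^ 3 * ?K = ?C x0"
    using regular_fixed_region_area(2)[OF R \<open>x0 \<in> W\<close> \<mu>[unfolded p_def v_def]] by (simp_all add: v_def)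
  then have "(1 - s) ^ 3 * ?C x0 = ((1 - s) * \<mu>) ^ 3 * ?K"
    by (simp add: power_mult_distrib)
  also have "\<dots> = ?C x'"
    using regular_fixed_region_area(2)[OF R \<open>x' \<in> W\<close> x'_tangent] \<open>\<tau>1 x' = \<tau>1 x0\<close>
    by (simp add: v_def)
  also have "\<dots> = ?C x0"
    by (rule r(3)[OF \<open>x' \<in> ball x0 r\<close>])
  finally have "(1 - s) ^ 3 = 1"
    using \<open>?C x0 \<noteq> 0\<close> by simp
  moreover have "(1 - s) ^ 3 < 1"
    using s by (simp add: power_less_one_iff)
  ultimately show False
    by simp
qed

end

theorem theorem5p3:
  fixes D1 D2 D3 :: "(real^2) set"
  assumes "outer_billiard_table D1" "outer_billiard_table D2" "outer_billiard_table D3"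
  shows "interior {x. x \<notin> D1 \<and> outer_billiard D1 x \<notin> D2 \<and>
                     outer_billiard D2 (outer_billiard D1 x) \<notin> D3 \<and>
                     outer_billiard D3 (outer_billiard D2 (outer_billiard D1 x)) = x} = {}"
    (is "interior ?S = {}")
proof (rule ccontr)
  assume "interior ?S \<noteq> {}"
  obtain \<alpha> \<alpha>' \<alpha>'' \<beta> \<beta>' \<beta>'' \<gamma> \<gamma>' \<gamma>''
    where "three_tables D1 \<alpha> \<alpha>' \<alpha>'' D2 \<beta> \<beta>' \<beta>'' D3 \<gamma> \<gamma>' \<gamma>''"
    using smooth_table_exists[OF assms(1)] smooth_table_exists[OF assms(2)]
      smooth_table_exists[OF assms(3)] by (metis three_tables.intro)
  then interpret three_tables D1 \<alpha> \<alpha>' \<alpha>'' D2 \<beta> \<beta>' \<beta>'' D3 \<gamma> \<gamma>' \<gamma>'' .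
  obtain W \<tau>1 \<tau>2 \<tau>3 where "regular_fixed_region W \<tau>1 \<tau>2 \<tau>3"
    using exists_regular_fixed_region[OF open_interior \<open>interior ?S \<noteq> {}\<close>] interior_subset
    by blast
  then show False
    using no_regular_fixed_region by blast
qed

end
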